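(* Let $\mathbb{G}$ be a stratified group. Then $\mathbb{R}$ factorizes $\mathbb{G}$; that is: $\mathbb{R}$ is an h-quotient of $\mathbb{G}$ and every normal homogeneous subgroup $N$ of $\mathbb{G}$ with $\mathbb{G}/N$ h-isomorphic to $\mathbb{R}$ has a complementary homogeneous subgroup; and $\mathbb{R}$ h-embeds into $\mathbb{G}$ and every homogeneous subgroup $H$ of $\mathbb{G}$ h-isomorphic to $\mathbb{R}$ has a complementary normal homogeneous subgroup.
   Context: Graded group: connected simply connected real Lie group with Lie algebra $V_1\oplus\cdots\oplus V_\iota$, $[V_i,V_j]\subset V_{i+j}$; stratified if $[V_i,V_j]=V_{i+j}$; dilations act by $r^i$ on $V_i$. $\mathbb{R}^k$ is the graded group with single layer and dilations $v\mapsto rv$. h-homomorphism: group homomorphism commuting with dilations; h-isomorphism: invertible h-homomorphism. Homogeneous subgroup: closed connected simply connected Lie subgroup invariant under dilations. $\mathbb{M}$ is an h-quotient of $\mathbb{G}$ if $\mathbb{G}/N$ is h-isomorphic to $\mathbb{M}$ for some normal homogeneous subgroup $N$; $\mathbb{M}$ h-embeds into $\mathbb{G}$ if some homogeneous subgroup of $\mathbb{G}$ is h-isomorphic to $\mathbb{M}$. Homogeneous subgroups $A,B$ are complementary if $AB=\mathbb{G}$ and $A\cap B=\{e\}$. *)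

theory Defs
  imports "HOL-Analysis.Analysis"
begin

(* A graded group G is modelled in exponential coordinates: the underlying
   space is its Lie algebra g (a finite-dimensional real vector space, DIM >= 1),
   with Lie bracket br, layers V 1, ..., V s (V i = {0} for i = 0 or i > s),
   group product given by the Baker-Campbell-Hausdorff-Dynkin series
   (finite, because g is nilpotent of step s), identity 0, inverse x |-> -x. *)

definition graded_lie_algebra ::
  "('g::euclidean_space \<Rightarrow> 'g \<Rightarrow> 'g) \<Rightarrow> (nat \<Rightarrow> 'g set) \<Rightarrow> nat \<Rightarrow> bool" where
  "graded_lie_algebra br V s \<longleftrightarrow>
     bilinear br \<and>
     (\<forall>x. br x x = 0) \<and>
     (\<forall>x y z. br x (br y z) + br y (br z x) + br z (br x y) = 0) \<and>
     (\<forall>i. subspace (V i)) \<and>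
     (\<forall>i. (i = 0 \<or> s < i) \<longrightarrow> V i = {0}) \<and>
     span (\<Union>i\<in>{1..s}. V i) = UNIV \<and>
     (\<forall>v. (\<forall>i. v i \<in> V i) \<and> (\<Sum>i\<in>{1..s}. v i) = 0 \<longrightarrow> (\<forall>i\<in>{1..s}. v i = 0)) \<and>
     (\<forall>i j x y. x \<in> V i \<and> y \<in> V j \<longrightarrow> br x y \<in> V (i + j))"

definition stratified_lie_algebra ::
  "('g::euclidean_space \<Rightarrow> 'g \<Rightarrow> 'g) \<Rightarrow> (nat \<Rightarrow> 'g set) \<Rightarrow> nat \<Rightarrow> bool" where
  "stratified_lie_algebra br V s \<longleftrightarrow>
     graded_lie_algebra br V s \<and>
     (\<forall>i j. 1 \<le> i \<longrightarrow> 1 \<le> j \<longrightarrow>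
        span {br x y | x y. x \<in> V i \<and> y \<in> V j} = V (i + j))"

fun nbr :: "('g \<Rightarrow> 'g \<Rightarrow> 'g) \<Rightarrow> 'g list \<Rightarrow> 'g::real_vector" where
  "nbr br [] = 0"
| "nbr br [a] = a"
| "nbr br (a # c # w) = br a (nbr br (c # w))"

text \<open>Dynkin's form of the BCH series, truncated at the step s
  (all omitted terms are brackets of length > s, hence vanish).\<close>
definition bch :: "('g \<Rightarrow> 'g \<Rightarrow> 'g) \<Rightarrow> nat \<Rightarrow> 'g \<Rightarrow> 'g \<Rightarrow> 'g::real_vector" where
  "bch br s x y =
     (\<Sum>n\<in>{1..s}. \<Sum>ps\<in>{ps. length ps = n \<and> set ps \<subseteq> {0..s} \<times> {0..s}
                               \<and> (\<forall>p\<in>set ps. 0 < fst p + snd p)}.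
        (((-1) ^ (n - 1) / real n)
          / (real (sum_list (map (\<lambda>(r,q). r + q) ps))
             * prod_list (map (\<lambda>(r,q). fact r * fact q) ps)))
        *\<^sub>R nbr br (concat (map (\<lambda>(r,q). replicate r x @ replicate q y) ps)))"

definition dil :: "(nat \<Rightarrow> 'g set) \<Rightarrow> nat \<Rightarrow> real \<Rightarrow> 'g \<Rightarrow> 'g::real_vector" where
  "dil V s r x = (THE y. \<exists>v. (\<forall>i. v i \<in> V i) \<and> x = (\<Sum>i\<in>{1..s}. v i)
                              \<and> y = (\<Sum>i\<in>{1..s}. (r ^ i) *\<^sub>R v i))"

text \<open>Homogeneous subgroup: closed connected simply connected (Lie) subgroup,
  invariant under dilations. (Closed subgroups are embedded Lie subgroups.)\<close>
definition hom_subgroup ::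
  "('g::euclidean_space \<Rightarrow> 'g \<Rightarrow> 'g) \<Rightarrow> (nat \<Rightarrow> 'g set) \<Rightarrow> nat \<Rightarrow> 'g set \<Rightarrow> bool" where
  "hom_subgroup br V s H \<longleftrightarrow>
     0 \<in> H \<and> (\<forall>x\<in>H. \<forall>y\<in>H. bch br s x y \<in> H) \<and> (\<forall>x\<in>H. - x \<in> H) \<and>
     closed H \<and> connected H \<and> simply_connected H \<and>
     (\<forall>r>0. \<forall>x\<in>H. dil V s r x \<in> H)"

definition normal_hom_subgroup ::
  "('g::euclidean_space \<Rightarrow> 'g \<Rightarrow> 'g) \<Rightarrow> (nat \<Rightarrow> 'g set) \<Rightarrow> nat \<Rightarrow> 'g set \<Rightarrow> bool" where
  "normal_hom_subgroup br V s N \<longleftrightarrow>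
     hom_subgroup br V s N \<and> (\<forall>g x. x \<in> N \<longrightarrow> bch br s (bch br s g x) (- g) \<in> N)"

definition h_hom_to_R ::
  "('g::euclidean_space \<Rightarrow> 'g \<Rightarrow> 'g) \<Rightarrow> (nat \<Rightarrow> 'g set) \<Rightarrow> nat \<Rightarrow> ('g \<Rightarrow> real) \<Rightarrow> bool" where
  "h_hom_to_R br V s \<phi> \<longleftrightarrow>
     continuous_on UNIV \<phi> \<and> (\<forall>x y. \<phi> (bch br s x y) = \<phi> x + \<phi> y) \<and>
     (\<forall>r>0. \<forall>x. \<phi> (dil V s r x) = r * \<phi> x)"

text \<open>G/N is h-isomorphic to R  (via the first isomorphism theorem:
  there is a surjective h-homomorphism G -> R with kernel N).\<close>
definition quotient_h_iso_R ::
  "('g::euclidean_space \<Rightarrow> 'g \<Rightarrow> 'g) \<Rightarrow> (nat \<Rightarrow> 'g set) \<Rightarrow> nat \<Rightarrow> 'g set \<Rightarrow> bool" where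
  "quotient_h_iso_R br V s N \<longleftrightarrow>
     (\<exists>\<phi>. h_hom_to_R br V s \<phi> \<and> surj \<phi> \<and> {x. \<phi> x = 0} = N)"

definition subgroup_h_iso_R ::
  "('g::euclidean_space \<Rightarrow> 'g \<Rightarrow> 'g) \<Rightarrow> (nat \<Rightarrow> 'g set) \<Rightarrow> nat \<Rightarrow> 'g set \<Rightarrow> bool" where
  "subgroup_h_iso_R br V s H \<longleftrightarrow>
     (\<exists>\<psi> :: real \<Rightarrow> 'g. bij_betw \<psi> UNIV H \<and>
        continuous_on UNIV \<psi> \<and> continuous_on H (inv_into UNIV \<psi>) \<and>
        (\<forall>a b. \<psi> (a + b) = bch br s (\<psi> a) (\<psi> b)) \<and>
        (\<forall>r>0. \<forall>a. \<psi> (r * a) = dil V s r (\<psi> a)))"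

definition complementary ::
  "('g::euclidean_space \<Rightarrow> 'g \<Rightarrow> 'g) \<Rightarrow> nat \<Rightarrow> 'g set \<Rightarrow> 'g set \<Rightarrow> bool" where
  "complementary br s A B \<longleftrightarrow>
     (\<lambda>(a, b). bch br s a b) ` (A \<times> B) = UNIV \<and> A \<inter> B = {0}"

end

(* Write the BCH product as x * y = x + y + R x y, where R collects the brackets of length at
   least 2; these lie in W 2 = V 2 + ... + V s. Hence the projection proj 1 onto the first layer
   turns the group law into vector addition, and right and left translations are onto, by solving
   n * w = g successively modulo W 1, W 2, ..., W (s + 1) = 0.
   An h-homomorphism f to R kills every layer V k with k >= 2, since f (dil 2 w) = 2 f w while
   dil 2 w = 2^k w; writing x = w * y with w in V k and y in W (k + 1), it kills W 2 by descending
   induction, so f factors through proj 1 and is linear. Dually, an h-embedded copy psi of R lies in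
   V 1, since dil 2 (psi a) = psi (2 a) = 2 psi a, and is a line there. A line R v in V 1 with
   f v <> 0 and the kernel of f therefore complement each other in both orders. Stratification
   is used only to see that V 1 <> 0. *)

theory Submission
  imports Defs
begin

(* Keeps the numeral 1 of V 1, proj 1 and {1..s} intact under simp. *)
declare One_nat_def [simp del]

definition bch_word :: "'g \<Rightarrow> 'g \<Rightarrow> (nat \<times> nat) list \<Rightarrow> 'g list" where
  "bch_word x y ps = concat (map (\<lambda>(r, q). replicate r x @ replicate q y) ps)"

definition bch_coeff :: "nat \<Rightarrow> (nat \<times> nat) list \<Rightarrow> real" where
  "bch_coeff n ps = ((-1) ^ (n - 1) / real n)
     / (real (sum_list (map (\<lambda>(r, q). r + q) ps)) * prod_list (map (\<lambda>(r, q). fact r * fact q) ps))"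

definition bch_index :: "nat \<Rightarrow> nat \<Rightarrow> (nat \<times> nat) list set" where
  "bch_index s n = {ps. length ps = n \<and> set ps \<subseteq> {0..s} \<times> {0..s} \<and> (\<forall>p\<in>set ps. 0 < fst p + snd p)}"

lemma bch_word_Nil [simp]: "bch_word x y [] = []"
  by (simp add: bch_word_def)

lemma bch_word_Cons [simp]:
  "bch_word x y ((r, q) # ps) = replicate r x @ replicate q y @ bch_word x y ps"
  by (simp add: bch_word_def)

lemma bch_eq_sum:
  "bch br s x y = (\<Sum>n\<in>{1..s}. \<Sum>ps\<in>bch_index s n. bch_coeff n ps *\<^sub>R nbr br (bch_word x y ps))"
  unfolding bch_def bch_index_def bch_word_def bch_coeff_def by (rule refl)

lemma length_bch_word: "length (bch_word x y ps) = sum_list (map (\<lambda>(r, q). r + q) ps)"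
  by (induction ps) auto

lemma length_le_length_bch_word:
  assumes "ps \<in> bch_index s n"
  shows "n \<le> length (bch_word x y ps)"
proof -
  have "length ps \<le> sum_list (map (\<lambda>(r, q). r + q) ps)"
    if "\<forall>p\<in>set ps. 0 < fst p + snd p" for ps :: "(nat \<times> nat) list"
    using that by (induction ps) auto
  then show ?thesis using assms unfolding bch_index_def length_bch_word by auto
qed

lemma finite_bch_index: "finite (bch_index s n)"
proof -
  have "bch_index s n \<subseteq> {ps. set ps \<subseteq> {0..s} \<times> {0..s} \<and> length ps = n}"
    unfolding bch_index_def by auto
  then show ?thesis using finite_lists_length_eq[of "{0..s} \<times> {0..s}" n] finite_subset by auto
qed

lemma bch_index_short_words:
  assumes "1 \<le> s"
  shows "{ps \<in> bch_index s 1. \<not> 2 \<le> length (bch_word x y ps)} = {[(1, 0)], [(0, 1)]}"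
proof -
  have "ps = [(1, 0)] \<or> ps = [(0, 1)]"
    if "ps \<in> bch_index s 1" "\<not> 2 \<le> length (bch_word x y ps)" for ps
  proof -
    have "length ps = 1" using that(1) unfolding bch_index_def by simp
    then obtain r q where "ps = [(r, q)]"
      by (metis One_nat_def length_0_conv length_Suc_conv surj_pair)
    moreover have "0 < r + q" using that(1) calculation unfolding bch_index_def by simp
    moreover have "r + q < 2" using that(2) calculation(1) unfolding length_bch_word by simp
    ultimately show ?thesis by (auto simp: less_Suc_eq)
  qed
  then show ?thesis using assms by (auto simp: bch_index_def)
qed

lemma list_all2_bch_word:
  assumes "P x x'" "P y y'"
  shows "list_all2 P (bch_word x y ps) (bch_word x' y' ps)"
proof (induction ps)
  case (Cons p ps)
  have "list_all2 P (replicate n a) (replicate n b)" if "P a b" for n a b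
    using that by (simp add: list_all2_conv_all_nth)
  then show ?case using Cons assms by (cases p) (simp add: list_all2_appendI)
qed simp

lemma set_bch_word: "set (bch_word x y ps) \<subseteq> {x, y}"
proof (induction ps)
  case (Cons p ps) then show ?case by (cases p) auto
qed simp

lemma scaleR_in_span_singleton [simp]: "c *\<^sub>R v \<in> span {v}"
  by (intro span_scale span_base) simp

lemma subspace_hom_subgroup:
  assumes "subspace H"
    and "\<And>x y. x \<in> H \<Longrightarrow> y \<in> H \<Longrightarrow> bch br s x y \<in> H"
    and "\<And>r x. 0 < r \<Longrightarrow> x \<in> H \<Longrightarrow> dil V s r x \<in> H"
  shows "hom_subgroup br V s H"
  using assms subspace_imp_convex[OF assms(1)]
  by (simp add: hom_subgroup_def subspace_0 subspace_neg closed_subspace convex_connected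
      convex_imp_simply_connected)

locale graded_group =
  fixes br :: "'g::euclidean_space \<Rightarrow> 'g \<Rightarrow> 'g" and V :: "nat \<Rightarrow> 'g set" and s :: nat
  assumes graded: "graded_lie_algebra br V s"
begin

lemma bilinear_br: "bilinear br"
  using graded unfolding graded_lie_algebra_def by simp

lemma br_self: "br x x = 0"
  using graded unfolding graded_lie_algebra_def by simp

lemma linear_br_left: "linear (\<lambda>x. br x y)"
  using bilinear_br unfolding bilinear_def by blast

lemma linear_br_right: "linear (\<lambda>y. br x y)"
  using bilinear_br unfolding bilinear_def by blast

lemma subspace_V: "subspace (V i)"
  using graded unfolding graded_lie_algebra_def by simp

lemma V_trivial:
  assumes "i = 0 \<or> s < i"
  shows "V i = {0}"
proof -
  have "\<forall>i. (i = 0 \<or> s < i) \<longrightarrow> V i = {0}"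
    using graded unfolding graded_lie_algebra_def by (elim conjE) assumption
  then show ?thesis using assms by blast
qed

lemma span_V: "span (\<Union>i\<in>{1..s}. V i) = UNIV"
  using graded unfolding graded_lie_algebra_def by simp

lemma V_sum_eq_0:
  assumes "\<forall>i. v i \<in> V i" "(\<Sum>i\<in>{1..s}. v i) = 0" "i \<in> {1..s}"
  shows "v i = 0"
proof -
  have "\<forall>v. (\<forall>i. v i \<in> V i) \<and> (\<Sum>i\<in>{1..s}. v i) = 0 \<longrightarrow> (\<forall>i\<in>{1..s}. v i = 0)"
    using graded unfolding graded_lie_algebra_def by (elim conjE) assumption
  then show ?thesis using assms by blast
qed

lemma br_V: "x \<in> V i \<Longrightarrow> y \<in> V j \<Longrightarrow> br x y \<in> V (i + j)"
  using graded unfolding graded_lie_algebra_def by simp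

lemma step_ge_1: "1 \<le> s"
proof (rule ccontr)
  assume "\<not> 1 \<le> s"
  then have "(UNIV :: 'g set) = {0}" using span_V by simp
  then show False using UNIV_not_singleton by blast
qed

definition W :: "nat \<Rightarrow> 'g set" where "W k = span (\<Union>j\<in>{k..}. V j)"

lemma subspace_W: "subspace (W k)"
  unfolding W_def by simp

lemma V_subset_W: "k \<le> j \<Longrightarrow> V j \<subseteq> W k"
  unfolding W_def by (intro order.trans[OF _ span_superset]) auto

lemma W_antimono: "k \<le> m \<Longrightarrow> W m \<subseteq> W k"
  unfolding W_def by (intro span_mono UN_mono) auto

lemma W_1 [simp]: "W 1 = UNIV"
proof -
  have "span (\<Union>i\<in>{1..s}. V i) \<subseteq> W 1"
    unfolding W_def by (intro span_mono) auto
  then show ?thesis using span_V by auto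
qed

lemma W_Suc_step [simp]: "W (Suc s) = {0}"
proof -
  have "(\<Union>j\<in>{Suc s..}. V j) \<subseteq> {0}" using V_trivial by auto
  then have "W (Suc s) \<subseteq> span {0}" unfolding W_def by (rule span_mono)
  then show ?thesis using subspace_0[OF subspace_W, of "Suc s"] by auto
qed

lemma W_0 [simp]: "W 0 = UNIV"
  using W_antimono[of 0 1] W_1 by blast

lemma br_W:
  assumes "x \<in> W i" "y \<in> W j"
  shows "br x y \<in> W (i + j)"
proof -
  have "br a b \<in> W (i + j)" if "a \<in> V p" "i \<le> p" "b \<in> V q" "j \<le> q" for a b p q
    using br_V[OF that(1,3)] V_subset_W[of "i + j" "p + q"] that by auto
  then have "br a y \<in> W (i + j)" if "a \<in> V p" "i \<le> p" for a p
    using span_induct[of y "\<Union>q\<in>{j..}. V q" "\<lambda>b. br a b \<in> W (i + j)"] assms(2) that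
      linear_subspace_vimage[OF linear_br_right subspace_W]
    unfolding W_def vimage_def by auto
  then show ?thesis
    using span_induct[of x "\<Union>p\<in>{i..}. V p" "\<lambda>a. br a y \<in> W (i + j)"] assms(1)
      linear_subspace_vimage[OF linear_br_left subspace_W]
    unfolding W_def vimage_def by auto
qed

lemma nbr_Cons: "t \<noteq> [] \<Longrightarrow> nbr br (a # t) = br a (nbr br t)"
  by (cases t) auto

lemma br_span_singleton: "a \<in> span {v} \<Longrightarrow> b \<in> span {v} \<Longrightarrow> br a b = 0"
  by (auto simp: span_singleton bilinear_lmul[OF bilinear_br] bilinear_rmul[OF bilinear_br] br_self)

lemma nbr_in_span: "set as \<subseteq> span {v} \<Longrightarrow> nbr br as \<in> span {v}"
proof (induction as)
  case (Cons a t) then show ?case by (cases t) (auto simp: br_span_singleton span_zero)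
qed (simp add: span_zero)

lemma nbr_collinear:
  assumes "set as \<subseteq> span {v}" "2 \<le> length as"
  shows "nbr br as = 0"
proof -
  obtain a t where as: "as = a # t" using assms(2) by (cases as) auto
  then have "t \<noteq> []" using assms(2) by auto
  moreover have "a \<in> span {v}" "nbr br t \<in> span {v}" using as assms(1) nbr_in_span[of t v] by auto
  ultimately show ?thesis using as br_span_singleton[of a v] by (simp add: nbr_Cons)
qed

lemma nbr_diff_W:
  assumes "list_all2 (\<lambda>a b. a - b \<in> W k) as bs" "2 \<le> length as"
  shows "nbr br as - nbr br bs \<in> W (Suc k)"
  using assms
proof (induction as arbitrary: bs)
  case Nil then show ?case by simp
next
  case (Cons a t)
  from Cons.prems obtain b u where bs: "bs = b # u" and ab: "a - b \<in> W k"
    and tu: "list_all2 (\<lambda>a b. a - b \<in> W k) t u"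
    by (auto simp: list_all2_Cons1)
  have "t \<noteq> []" "u \<noteq> []"
    using Cons.prems(2) tu list_all2_lengthD by (fastforce simp: Suc_le_eq)+
  have "nbr br t - nbr br u \<in> W k"
  proof (cases "2 \<le> length t")
    case True then show ?thesis using Cons.IH[OF tu] W_antimono[of k "Suc k"] by auto
  next
    case False
    then obtain c d where "t = [c]" "u = [d]" "c - d \<in> W k"
      using \<open>t \<noteq> []\<close> tu by (cases t) (auto simp: list_all2_Cons1 not_le less_one)
    then show ?thesis by simp
  qed
  then have "br (a - b) (nbr br t) \<in> W (Suc k)" "br b (nbr br t - nbr br u) \<in> W (Suc k)"
    using br_W[OF ab, of "nbr br t" 1] br_W[of b 1 "nbr br t - nbr br u" k]
    by (simp_all add: Suc_eq_plus1 add.commute)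
  moreover have "nbr br (a # t) - nbr br bs = br (a - b) (nbr br t) + br b (nbr br t - nbr br u)"
    using \<open>t \<noteq> []\<close> \<open>u \<noteq> []\<close> bs
    by (simp add: nbr_Cons bilinear_lsub[OF bilinear_br] bilinear_rsub[OF bilinear_br])
  ultimately show ?case using subspace_add[OF subspace_W] by simp
qed

lemma zero_in_W [simp]: "0 \<in> W k"
  by (rule subspace_0[OF subspace_W])

definition bch_rem :: "'g \<Rightarrow> 'g \<Rightarrow> 'g" where
  "bch_rem x y = (\<Sum>n\<in>{1..s}. \<Sum>ps\<in>bch_index s n.
     if 2 \<le> length (bch_word x y ps) then bch_coeff n ps *\<^sub>R nbr br (bch_word x y ps) else 0)"

lemma bch_eq_add_rem: "bch br s x y = x + y + bch_rem x y"
proof -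
  define T where "T n ps = bch_coeff n ps *\<^sub>R nbr br (bch_word x y ps)" for n ps
  define long where "long ps \<longleftrightarrow> 2 \<le> length (bch_word x y ps)" for ps
  have "bch br s x y = (\<Sum>n\<in>{1..s}. \<Sum>ps\<in>bch_index s n.
      (if long ps then T n ps else 0) + (if long ps then 0 else T n ps))"
    unfolding bch_eq_sum T_def[symmetric] by (intro sum.cong refl) simp
  also have "\<dots> = bch_rem x y + (\<Sum>n\<in>{1..s}. \<Sum>ps\<in>bch_index s n. if long ps then 0 else T n ps)"
    unfolding bch_rem_def T_def long_def by (simp add: sum.distrib)
  also have "(\<Sum>n\<in>{1..s}. \<Sum>ps\<in>bch_index s n. if long ps then 0 else T n ps) = x + y"
  proof -
    have "(\<Sum>ps\<in>bch_index s n. if long ps then 0 else T n ps) = (if n = 1 then x + y else 0)"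
      if "n \<in> {1..s}" for n
    proof (cases "n = 1")
      case True
      have "(\<Sum>ps\<in>bch_index s 1. if long ps then 0 else T 1 ps)
          = (\<Sum>ps\<in>{ps \<in> bch_index s 1. \<not> long ps}. T 1 ps)"
        by (subst sum.inter_filter[OF finite_bch_index]) (rule sum.cong, auto)
      also have "\<dots> = x + y"
        unfolding long_def bch_index_short_words[OF step_ge_1] T_def
        by (simp add: bch_coeff_def One_nat_def)
      finally show ?thesis unfolding True by simp
    next
      case False
      with that have "long ps" if "ps \<in> bch_index s n" for ps
        using length_le_length_bch_word[OF that, of x y] unfolding long_def by auto
      then show ?thesis using False by simp
    qed
    then have "(\<Sum>n\<in>{1..s}. \<Sum>ps\<in>bch_index s n. if long ps then 0 else T n ps)
        = (\<Sum>n\<in>{1..s}. if n = 1 then x + y else 0)"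
      by (rule sum.cong[OF refl])
    then show ?thesis using step_ge_1 by simp
  qed
  finally show ?thesis by (simp add: algebra_simps)
qed

lemma bch_rem_diff_W:
  assumes "x - x' \<in> W k" "y - y' \<in> W k"
  shows "bch_rem x y - bch_rem x' y' \<in> W (Suc k)"
proof -
  have "bch_rem x y - bch_rem x' y' = (\<Sum>n\<in>{1..s}. \<Sum>ps\<in>bch_index s n.
      if 2 \<le> length (bch_word x y ps)
      then bch_coeff n ps *\<^sub>R (nbr br (bch_word x y ps) - nbr br (bch_word x' y' ps)) else 0)"
    unfolding bch_rem_def sum_subtractf[symmetric]
    by (intro sum.cong refl) (simp add: length_bch_word scaleR_diff_right)
  also have "\<dots> \<in> W (Suc k)"
    using nbr_diff_W[OF list_all2_bch_word[of "\<lambda>a b. a - b \<in> W k", OF assms]]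
    by (intro subspace_sum[OF subspace_W]) (simp add: subspace_scale[OF subspace_W])
  finally show ?thesis .
qed

lemma bch_rem_collinear:
  assumes "x \<in> span {v}" "y \<in> span {v}"
  shows "bch_rem x y = 0"
proof -
  have "set (bch_word x y ps) \<subseteq> span {v}" for ps
    using set_bch_word[of x y ps] assms by blast
  then have "2 \<le> length (bch_word x y ps) \<Longrightarrow> nbr br (bch_word x y ps) = 0" for ps
    using nbr_collinear by blast
  then show ?thesis unfolding bch_rem_def by (simp cong: if_cong)
qed

lemma bch_collinear: "x \<in> span {v} \<Longrightarrow> y \<in> span {v} \<Longrightarrow> bch br s x y = x + y"
  using bch_rem_collinear[of x v y] by (simp add: bch_eq_add_rem)

lemma bch_self: "bch br s x x = 2 *\<^sub>R x"
  using bch_collinear[of x x x] by (simp add: span_base scaleR_2)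

lemma bch_rem_W2: "bch_rem x y \<in> W 2"
  using bch_rem_diff_W[of x 0 1 y 0] bch_rem_collinear[of 0 0 0]
  by (simp add: numeral_2_eq_2 span_zero)

text \<open>Successive approximation along the filtration: each step corrects the error in W k,
  and the error of the corrected point lies in W (Suc k).\<close>
lemma surj_of_filtered_perturbation:
  assumes "\<And>a b k. a - b \<in> W k \<Longrightarrow> (T a - a) - (T b - b) \<in> W (Suc k)"
  shows "surj T"
proof -
  have "\<exists>n. g - T n \<in> W k" for g k
  proof (induction k)
    case (Suc k)
    then obtain n where "g - T n \<in> W k" by blast
    then have "(T (n + (g - T n)) - (n + (g - T n))) - (T n - n) \<in> W (Suc k)"
      using assms[of "n + (g - T n)" n k] by simp
    then have "g - T (n + (g - T n)) \<in> W (Suc k)"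
      using subspace_neg[OF subspace_W] by (fastforce simp: algebra_simps)
    then show ?case by blast
  qed simp
  then have "\<exists>n. g = T n" for g using W_Suc_step by (metis right_minus_eq singletonD)
  then show ?thesis unfolding surj_def by blast
qed

lemma surj_bch_left: "surj (\<lambda>n. bch br s n w)"
proof (rule surj_of_filtered_perturbation)
  fix a b k assume "a - b \<in> W k"
  then have "bch_rem a w - bch_rem b w \<in> W (Suc k)" by (simp add: bch_rem_diff_W)
  moreover have "(bch br s a w - a) - (bch br s b w - b) = bch_rem a w - bch_rem b w"
    by (simp add: bch_eq_add_rem algebra_simps)
  ultimately show "(bch br s a w - a) - (bch br s b w - b) \<in> W (Suc k)" by simp
qed

lemma surj_bch_right: "surj (\<lambda>n. bch br s w n)"
proof (rule surj_of_filtered_perturbation)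
  fix a b k assume "a - b \<in> W k"
  then have "bch_rem w a - bch_rem w b \<in> W (Suc k)" by (simp add: bch_rem_diff_W)
  moreover have "(bch br s w a - a) - (bch br s w b - b) = bch_rem w a - bch_rem w b"
    by (simp add: bch_eq_add_rem algebra_simps)
  ultimately show "(bch br s w a - a) - (bch br s w b - b) \<in> W (Suc k)" by simp
qed

lemma bch_decomp_W:
  assumes "x \<in> W k"
  shows "\<exists>w\<in>V k. \<exists>y\<in>W (Suc k). x = bch br s w y"
proof -
  have "{k..} = insert k {Suc k..}" by auto
  then have "(\<Union>j\<in>{k..}. V j) = V k \<union> (\<Union>j\<in>{Suc k..}. V j)" by simp
  then have "x \<in> span (V k \<union> (\<Union>j\<in>{Suc k..}. V j))" using assms unfolding W_def by simp
  then obtain a b where ab: "x = a + b" "a \<in> V k" "b \<in> W (Suc k)"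
    using span_minimal[OF subset_refl subspace_V] unfolding W_def span_Un by blast
  obtain y where y: "x = bch br s a y" using surj_bch_right[of a] by blast
  have "bch_rem a y - bch_rem 0 y \<in> W (Suc k)"
    using ab(2) V_subset_W[of k k] by (intro bch_rem_diff_W) auto
  moreover have "bch_rem 0 y = 0"
    by (rule bch_rem_collinear[of _ y]) (simp_all add: span_zero span_base)
  ultimately have "y = b - bch_rem a y" "bch_rem a y \<in> W (Suc k)"
    using y ab(1) by (simp_all add: bch_eq_add_rem algebra_simps)
  then have "y \<in> W (Suc k)" using subspace_diff[OF subspace_W ab(3)] by metis
  then show ?thesis using ab(2) y by blast
qed

lemma sum_single_layer:
  assumes "w \<in> V k"
  shows "(\<Sum>i\<in>{1..s}. if i = k then w else 0) = w"
proof (cases "k \<in> {1..s}")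
  case False
  then have "V k = {0}" by (intro V_trivial) auto
  then show ?thesis using assms by simp
qed simp

lemma single_layer_in_V: "w \<in> V k \<Longrightarrow> (if i = k then w else 0) \<in> V i"
  using subspace_0[OF subspace_V] by simp

lemma V_decomp_exists: "\<exists>v. (\<forall>i. v i \<in> V i) \<and> x = (\<Sum>i\<in>{1..s}. v i)"
proof -
  define D where "D = {x. \<exists>v. (\<forall>i. v i \<in> V i) \<and> x = (\<Sum>i\<in>{1..s}. v i)}"
  have "subspace D"
    unfolding subspace_def
  proof (intro conjI ballI allI)
    show "0 \<in> D"
      unfolding D_def using subspace_0[OF subspace_V] by (intro CollectI exI[of _ "\<lambda>_. 0"]) simp
  next
    fix x y assume "x \<in> D" "y \<in> D"
    then obtain v v' where "\<forall>i. v i \<in> V i" "x = (\<Sum>i\<in>{1..s}. v i)"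
      "\<forall>i. v' i \<in> V i" "y = (\<Sum>i\<in>{1..s}. v' i)"
      unfolding D_def by blast
    then show "x + y \<in> D" unfolding D_def
      by (intro CollectI exI[of _ "\<lambda>i. v i + v' i"])
        (simp add: sum.distrib subspace_add[OF subspace_V])
  next
    fix c and x assume "x \<in> D"
    then obtain v where "\<forall>i. v i \<in> V i" "x = (\<Sum>i\<in>{1..s}. v i)" unfolding D_def by blast
    then show "c *\<^sub>R x \<in> D" unfolding D_def
      by (intro CollectI exI[of _ "\<lambda>i. c *\<^sub>R v i"])
        (simp add: scaleR_sum_right subspace_scale[OF subspace_V])
  qed
  moreover have "(\<Union>i\<in>{1..s}. V i) \<subseteq> D"
  proof
    fix x assume "x \<in> (\<Union>i\<in>{1..s}. V i)"
    then obtain k where k: "x \<in> V k" by blast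
    have "\<forall>i. (if i = k then x else 0) \<in> V i" using single_layer_in_V[OF k] by blast
    moreover have "x = (\<Sum>i\<in>{1..s}. if i = k then x else 0)" using sum_single_layer[OF k] by simp
    ultimately show "x \<in> D"
      unfolding D_def by (intro CollectI exI[of _ "\<lambda>i. if i = k then x else 0"] conjI)
  qed
  ultimately have "span (\<Union>i\<in>{1..s}. V i) \<subseteq> D" by (intro span_minimal)
  then show ?thesis using span_V unfolding D_def by auto
qed

lemma V_decomp_unique:
  assumes "\<forall>i. v i \<in> V i" "\<forall>i. v' i \<in> V i" "(\<Sum>i\<in>{1..s}. v i) = (\<Sum>i\<in>{1..s}. v' i)"
  shows "v i = v' i"
proof (cases "i \<in> {1..s}")
  case True
  have "\<forall>j. v j - v' j \<in> V j" using assms(1,2) subspace_diff[OF subspace_V] by blast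
  moreover have "(\<Sum>j\<in>{1..s}. v j - v' j) = 0" using assms(3) by (simp add: sum_subtractf)
  ultimately have "v i - v' i = 0" by (rule V_sum_eq_0[OF _ _ True])
  then show ?thesis by simp
next
  case False
  then have "V i = {0}" by (intro V_trivial) auto
  moreover have "v i \<in> V i" "v' i \<in> V i" using assms(1,2) by blast+
  ultimately show ?thesis by simp
qed

definition proj :: "nat \<Rightarrow> 'g \<Rightarrow> 'g" where
  "proj i x = (SOME v. (\<forall>j. v j \<in> V j) \<and> x = (\<Sum>j\<in>{1..s}. v j)) i"

lemma proj_decomp: "(\<forall>i. proj i x \<in> V i) \<and> x = (\<Sum>i\<in>{1..s}. proj i x)"
  unfolding proj_def by (rule someI_ex[OF V_decomp_exists])

lemma proj_in_V: "proj i x \<in> V i"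
  using proj_decomp by blast

lemma sum_proj: "(\<Sum>i\<in>{1..s}. proj i x) = x"
  using proj_decomp by metis

lemma proj_eq: "\<forall>j. v j \<in> V j \<Longrightarrow> x = (\<Sum>j\<in>{1..s}. v j) \<Longrightarrow> proj i x = v i"
  using V_decomp_unique[of "\<lambda>i. proj i x" v] proj_in_V sum_proj by blast

lemma proj_V:
  assumes "w \<in> V k"
  shows "proj i w = (if i = k then w else 0)"
proof -
  have "\<forall>j. (if j = k then w else 0) \<in> V j" using single_layer_in_V[OF assms] by blast
  from proj_eq[OF this sum_single_layer[OF assms, symmetric]] show ?thesis .
qed

lemma linear_proj: "linear (proj i)"
proof (rule linearI)
  fix x y show "proj i (x + y) = proj i x + proj i y"
    by (rule proj_eq) (simp_all add: proj_in_V subspace_add[OF subspace_V] sum.distrib sum_proj)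
next
  fix c x show "proj i (c *\<^sub>R x) = c *\<^sub>R proj i x"
    by (rule proj_eq)
      (simp_all add: proj_in_V subspace_scale[OF subspace_V] scaleR_sum_right[symmetric] sum_proj)
qed

lemma proj_W:
  assumes "x \<in> W k" "i < k"
  shows "proj i x = 0"
proof -
  have "proj i w = 0" if "w \<in> (\<Union>j\<in>{k..}. V j)" for w using that assms(2) proj_V by auto
  then show ?thesis
    using span_induct[of x _ "\<lambda>x. proj i x = 0"] assms(1) linear_subspace_kernel[OF linear_proj]
    unfolding W_def by blast
qed

lemma proj_1_bch: "proj 1 (bch br s x y) = proj 1 x + proj 1 y"
  using proj_W[OF bch_rem_W2] by (simp add: bch_eq_add_rem linear_add[OF linear_proj])

lemma dil_eq_sum: "dil V s r x = (\<Sum>i\<in>{1..s}. r ^ i *\<^sub>R proj i x)"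
  unfolding dil_def
proof (rule the_equality)
  show "\<exists>v. (\<forall>i. v i \<in> V i) \<and> x = (\<Sum>i\<in>{1..s}. v i)
      \<and> (\<Sum>i\<in>{1..s}. r ^ i *\<^sub>R proj i x) = (\<Sum>i\<in>{1..s}. r ^ i *\<^sub>R v i)"
    by (intro exI[of _ "\<lambda>i. proj i x"]) (simp add: proj_in_V sum_proj)
next
  fix y
  assume "\<exists>v. (\<forall>i. v i \<in> V i) \<and> x = (\<Sum>i\<in>{1..s}. v i) \<and> y = (\<Sum>i\<in>{1..s}. r ^ i *\<^sub>R v i)"
  then show "y = (\<Sum>i\<in>{1..s}. r ^ i *\<^sub>R proj i x)" using proj_eq by auto
qed

lemma proj_dil: "proj i (dil V s r x) = r ^ i *\<^sub>R proj i x"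
  by (rule proj_eq) (simp_all add: dil_eq_sum proj_in_V subspace_scale[OF subspace_V])

lemma dil_V: "w \<in> V k \<Longrightarrow> dil V s r w = r ^ k *\<^sub>R w"
  using sum_single_layer[of "r ^ k *\<^sub>R w" k] subspace_scale[OF subspace_V]
  by (simp add: dil_eq_sum proj_V if_distrib cong: if_cong)

lemma V1_if_dil_2_eq_double:
  assumes "dil V s 2 u = 2 *\<^sub>R u"
  shows "u \<in> V 1"
proof -
  have "proj i u = 0" if "i \<noteq> 1" for i
  proof -
    have "(2 ^ i - 2) *\<^sub>R proj i u = 0"
      using proj_dil[of i 2 u] assms linear_scale[OF linear_proj, of i 2 u]
      by (simp add: scaleR_diff_left)
    moreover have "(2::real) ^ i \<noteq> 2" using that power_inject_exp[of "2::real" i 1] by simp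
    ultimately show ?thesis by simp
  qed
  then have "u = (\<Sum>i\<in>{1..s}. if i = 1 then proj 1 u else 0)"
    by (subst sum_proj[symmetric]) (rule sum.cong, auto)
  then show ?thesis using step_ge_1 proj_in_V[of 1 u] by simp
qed

lemma h_hom_bch: "h_hom_to_R br V s f \<Longrightarrow> f (bch br s x y) = f x + f y"
  unfolding h_hom_to_R_def by blast

lemma h_hom_dil: "h_hom_to_R br V s f \<Longrightarrow> 0 < r \<Longrightarrow> f (dil V s r x) = r * f x"
  unfolding h_hom_to_R_def by blast

lemma h_hom_zero: "h_hom_to_R br V s f \<Longrightarrow> f 0 = 0"
  using h_hom_bch[of f 0 0] bch_self[of 0] by simp

lemma h_hom_scale_pow2:
  assumes f: "h_hom_to_R br V s f"
  shows "f (2 ^ n *\<^sub>R x) = 2 ^ n * f x"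
proof (induction n)
  case (Suc n)
  have "f (2 ^ Suc n *\<^sub>R x) = f (bch br s (2 ^ n *\<^sub>R x) (2 ^ n *\<^sub>R x))"
    by (simp add: bch_self)
  then show ?case using Suc h_hom_bch[OF f] by simp
qed simp

text \<open>Homogeneity makes f scale like r on V k, additivity like r ^ k.\<close>
lemma h_hom_V_zero:
  assumes f: "h_hom_to_R br V s f" and "w \<in> V k" "2 \<le> k"
  shows "f w = 0"
proof -
  have "2 ^ k * f w = 2 * f w"
    using h_hom_dil[OF f, of 2 w] h_hom_scale_pow2[OF f, of k w] dil_V[OF assms(2)] by simp
  moreover have "(2::real) ^ k \<noteq> 2" using assms(3) power_inject_exp[of "2::real" k 1] by simp
  ultimately show ?thesis by simp
qed

lemma h_hom_W_zero:
  assumes f: "h_hom_to_R br V s f" and "2 \<le> k" "x \<in> W k"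
  shows "f x = 0"
proof -
  have "\<forall>x\<in>W k. f x = 0" if "k \<le> Suc s" "2 \<le> k" for k
    using that
  proof (induction k rule: inc_induct)
    case base then show ?case using h_hom_zero[OF f] by simp
  next
    case (step k)
    show ?case
    proof
      fix x assume "x \<in> W k"
      then obtain w y where "w \<in> V k" "y \<in> W (Suc k)" "x = bch br s w y"
        using bch_decomp_W by blast
      then show "f x = 0" using step h_hom_bch[OF f] h_hom_V_zero[OF f] by simp
    qed
  qed
  then show ?thesis
    using assms(2,3) W_antimono[of "Suc s" k] h_hom_zero[OF f] by (cases "k \<le> Suc s") auto
qed

lemma h_hom_proj_1:
  assumes f: "h_hom_to_R br V s f"
  shows "f x = f (proj 1 x)"
proof -
  obtain w y where w: "w \<in> V 1" and y: "y \<in> W 2" and x: "x = bch br s w y"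
    using bch_decomp_W[of x 1] by (auto simp: Suc_1)
  have "f y = 0" "proj 1 y = 0" using h_hom_W_zero[OF f _ y] proj_W[OF y] by simp_all
  then show ?thesis using x h_hom_bch[OF f] proj_1_bch proj_V[OF w] by simp
qed

lemma h_hom_scale_V1:
  assumes f: "h_hom_to_R br V s f" and v: "v \<in> V 1"
  shows "f (c *\<^sub>R v) = c * f v"
proof -
  have pos: "f (c *\<^sub>R v) = c * f v" if "0 < c" for c
    using h_hom_dil[OF f that, of v] dil_V[OF v, of c] by simp
  have "bch br s (c *\<^sub>R v) ((- c) *\<^sub>R v) = 0"
    using bch_collinear[of "c *\<^sub>R v" v "(- c) *\<^sub>R v"] by (simp add: span_neg)
  then have "f (c *\<^sub>R v) + f ((- c) *\<^sub>R v) = 0"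
    using h_hom_bch[OF f, of "c *\<^sub>R v" "(- c) *\<^sub>R v"] h_hom_zero[OF f] by simp
  then show ?thesis
    using pos[of c] pos[of "- c"] h_hom_zero[OF f] by (cases c "0::real" rule: linorder_cases) auto
qed

text \<open>An h-homomorphism to R factors through the projection onto V 1, on which the
  group law is vector addition.\<close>
lemma h_hom_linear:
  assumes f: "h_hom_to_R br V s f"
  shows "linear f"
proof (rule linearI)
  fix x y
  have "f (x + y) = f (proj 1 (bch br s x y))"
    using h_hom_proj_1[OF f] proj_1_bch linear_add[OF linear_proj] by metis
  then show "f (x + y) = f x + f y" using h_hom_proj_1[OF f] h_hom_bch[OF f] by metis
next
  fix c x
  have "f (c *\<^sub>R x) = f (c *\<^sub>R proj 1 x)"
    using h_hom_proj_1[OF f] linear_scale[OF linear_proj] by metis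
  then show "f (c *\<^sub>R x) = c *\<^sub>R f x"
    using h_hom_scale_V1[OF f proj_in_V] h_hom_proj_1[OF f] by simp
qed

lemma surj_h_hom_iff:
  assumes f: "h_hom_to_R br V s f"
  shows "surj f \<longleftrightarrow> (\<exists>v\<in>V 1. f v \<noteq> 0)"
proof
  assume "surj f"
  then obtain x where "f x = 1" by (metis surjD)
  then have "f (proj 1 x) \<noteq> 0" using h_hom_proj_1[OF f, of x] by simp
  then show "\<exists>v\<in>V 1. f v \<noteq> 0" using proj_in_V by blast
next
  assume "\<exists>v\<in>V 1. f v \<noteq> 0"
  then obtain v where "f v \<noteq> 0" by blast
  then have "f ((c / f v) *\<^sub>R v) = c" for c using linear_scale[OF h_hom_linear[OF f]] by simp
  then show "surj f" by (rule surjI)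
qed

lemma h_hom_inner_proj_1: "h_hom_to_R br V s (\<lambda>x. proj 1 x \<bullet> u)"
proof -
  have "linear (\<lambda>x. proj 1 x \<bullet> u)"
    by (rule linearI)
      (simp_all add: linear_add[OF linear_proj] linear_scale[OF linear_proj] inner_add_left)
  then show ?thesis
    unfolding h_hom_to_R_def
    by (simp add: linear_continuous_on linear_conv_bounded_linear proj_1_bch proj_dil inner_add_left)
qed

lemma kernel_normal_hom_subgroup:
  assumes f: "h_hom_to_R br V s f"
  shows "normal_hom_subgroup br V s {x. f x = 0}"
proof -
  have "hom_subgroup br V s {x. f x = 0}"
    using linear_subspace_kernel[OF h_hom_linear[OF f]] h_hom_bch[OF f] h_hom_dil[OF f]
    by (intro subspace_hom_subgroup) auto
  then show ?thesis
    unfolding normal_hom_subgroup_def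
    using h_hom_bch[OF f] linear_neg[OF h_hom_linear[OF f]] by simp
qed

lemma span_V1_hom_subgroup:
  assumes u: "u \<in> V 1"
  shows "hom_subgroup br V s (span {u})"
proof (rule subspace_hom_subgroup)
  fix r x assume "x \<in> span {u}"
  then obtain c where "x = c *\<^sub>R u" by (auto simp: span_singleton)
  then show "dil V s r x \<in> span {u}" using dil_V[OF subspace_scale[OF subspace_V u]] by simp
next
  fix x y assume "x \<in> span {u}" "y \<in> span {u}"
  then show "bch br s x y \<in> span {u}" using bch_collinear span_add by metis
qed simp

lemma span_V1_h_iso_R:
  assumes u: "u \<in> V 1" "u \<noteq> 0"
  shows "subgroup_h_iso_R br V s (span {u})"
  unfolding subgroup_h_iso_R_def
proof (intro exI[of _ "\<lambda>c. c *\<^sub>R u"] conjI allI impI)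
  have inj: "inj (\<lambda>c. c *\<^sub>R u)" using u(2) by (simp add: inj_on_def)
  then show "bij_betw (\<lambda>c. c *\<^sub>R u) UNIV (span {u})" by (simp add: bij_betw_def span_singleton)
  have "(x \<bullet> u) / (u \<bullet> u) = inv_into UNIV (\<lambda>c. c *\<^sub>R u) x" if "x \<in> span {u}" for x
    using that u(2) inv_into_f_f[OF inj] by (auto simp: span_singleton)
  moreover have "continuous_on (span {u}) (\<lambda>x. (x \<bullet> u) / (u \<bullet> u))"
    using u(2) by (intro continuous_intros) auto
  ultimately show "continuous_on (span {u}) (inv_into UNIV (\<lambda>c. c *\<^sub>R u))"
    using continuous_on_eq by blast
  show "(a + b) *\<^sub>R u = bch br s (a *\<^sub>R u) (b *\<^sub>R u)" for a b
    using bch_collinear[of "a *\<^sub>R u" u "b *\<^sub>R u"] by (simp add: scaleR_add_left)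
  show "(r * a) *\<^sub>R u = dil V s r (a *\<^sub>R u)" for r a
    using dil_V[OF subspace_scale[OF subspace_V u(1)]] by simp
qed (intro continuous_intros)

lemma h_iso_R_subgroup_eq_span_V1:
  assumes "subgroup_h_iso_R br V s H"
  shows "\<exists>u\<in>V 1. u \<noteq> 0 \<and> H = span {u}"
proof -
  obtain \<psi> where bij: "bij_betw \<psi> UNIV H"
    and add: "\<And>a b. \<psi> (a + b) = bch br s (\<psi> a) (\<psi> b)"
    and hom: "\<And>r a. 0 < r \<Longrightarrow> \<psi> (r * a) = dil V s r (\<psi> a)"
    using assms unfolding subgroup_h_iso_R_def by blast
  have V1: "\<psi> a \<in> V 1" for a
  proof (rule V1_if_dil_2_eq_double)
    have "dil V s 2 (\<psi> a) = \<psi> (2 * a)" using hom[of 2 a] by simp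
    also have "\<dots> = \<psi> (a + a)" by (simp only: mult_2)
    also have "\<dots> = bch br s (\<psi> a) (\<psi> a)" by (rule add)
    finally show "dil V s 2 (\<psi> a) = 2 *\<^sub>R \<psi> a" by (simp only: bch_self)
  qed
  have additive: "\<psi> (a + b) = \<psi> a + \<psi> b" for a b
  proof -
    have "\<psi> (a + b) = proj 1 (bch br s (\<psi> a) (\<psi> b))"
      using add[of a b] proj_V[OF V1[of "a + b"]] by simp
    also have "\<dots> = \<psi> a + \<psi> b"
      using proj_1_bch proj_V[OF V1[of a]] proj_V[OF V1[of b]] by simp
    finally show ?thesis .
  qed
  have zero: "\<psi> 0 = 0" using additive[of 0 0] by simp
  have linear: "\<psi> a = a *\<^sub>R \<psi> 1" for a
  proof (cases a "0::real" rule: linorder_cases)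
    case less
    have "\<psi> a + \<psi> (- a) = 0" using additive[of a "- a"] zero by simp
    moreover have "\<psi> (- a) = (- a) *\<^sub>R \<psi> 1"
      using hom[of "- a" 1] dil_V[OF V1[of 1]] less by simp
    ultimately show ?thesis by (simp add: add_eq_0_iff2)
  next
    case greater
    then show ?thesis using hom[of a 1] dil_V[OF V1[of 1]] by simp
  qed (simp add: zero)
  have "\<psi> 1 \<noteq> 0" using injD[OF bij_betw_imp_inj_on[OF bij], of 1 0] zero by auto
  moreover have "H = span {\<psi> 1}"
  proof -
    have "H = range \<psi>" using bij by (simp add: bij_betw_def)
    also have "\<dots> = range (\<lambda>a. a *\<^sub>R \<psi> 1)" by (rule image_cong[OF refl linear])
    finally show ?thesis by (simp add: span_singleton)
  qed
  ultimately show ?thesis using V1 by blast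
qed

lemma complementary_kernel_span:
  assumes f: "h_hom_to_R br V s f" and v: "f v \<noteq> 0"
  shows "complementary br s {x. f x = 0} (span {v})"
    and "complementary br s (span {v}) {x. f x = 0}"
proof -
  have scale: "f (c *\<^sub>R v) = c * f v" for c using linear_scale[OF h_hom_linear[OF f]] by simp
  have cap: "{x. f x = 0} \<inter> span {v} = {0}"
  proof (intro equalityI subsetI)
    fix x assume "x \<in> {x. f x = 0} \<inter> span {v}"
    then obtain c where x: "x = c *\<^sub>R v" and "f x = 0" by (auto simp: span_singleton)
    then have "c = 0" using scale v by simp
    then show "x \<in> {0}" using x by simp
  qed (simp add: h_hom_zero[OF f] span_zero)
  have "g \<in> (\<lambda>(a, b). bch br s a b) ` ({x. f x = 0} \<times> span {v})" for g
  proof -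
    define c where "c = f g / f v"
    obtain n where n: "g = bch br s n (c *\<^sub>R v)"
      using surj_bch_left[of "c *\<^sub>R v"] unfolding surj_def by blast
    have "f g = f n + c * f v" using h_hom_bch[OF f] scale n by simp
    moreover have "c * f v = f g" using v unfolding c_def by simp
    ultimately have "f n = 0" by simp
    then show ?thesis using n by (auto intro!: image_eqI[of _ _ "(n, c *\<^sub>R v)"])
  qed
  then show "complementary br s {x. f x = 0} (span {v})"
    using cap unfolding complementary_def by blast
  have "g \<in> (\<lambda>(a, b). bch br s a b) ` (span {v} \<times> {x. f x = 0})" for g
  proof -
    define c where "c = f g / f v"
    obtain n where n: "g = bch br s (c *\<^sub>R v) n"
      using surj_bch_right[of "c *\<^sub>R v"] unfolding surj_def by blast
    have "f g = c * f v + f n" using h_hom_bch[OF f] scale n by simp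
    moreover have "c * f v = f g" using v unfolding c_def by simp
    ultimately have "f n = 0" by simp
    then show ?thesis using n by (auto intro!: image_eqI[of _ _ "(c *\<^sub>R v, n)"])
  qed
  then show "complementary br s (span {v}) {x. f x = 0}"
    using cap unfolding complementary_def by blast
qed

lemma kernel_has_complement:
  assumes "quotient_h_iso_R br V s N"
  shows "\<exists>A. hom_subgroup br V s A \<and> complementary br s N A"
proof -
  obtain f where f: "h_hom_to_R br V s f" "surj f" and N: "N = {x. f x = 0}"
    using assms unfolding quotient_h_iso_R_def by blast
  then obtain v where "v \<in> V 1" "f v \<noteq> 0" using surj_h_hom_iff by blast
  then show ?thesis using span_V1_hom_subgroup complementary_kernel_span(1)[OF f(1)] N by blast
qed

lemma h_iso_R_subgroup_has_complement:
  assumes "subgroup_h_iso_R br V s H"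
  shows "\<exists>N. normal_hom_subgroup br V s N \<and> complementary br s H N"
proof -
  obtain u where u: "u \<in> V 1" "u \<noteq> 0" "H = span {u}"
    using h_iso_R_subgroup_eq_span_V1[OF assms] by blast
  then have "proj 1 u \<bullet> u \<noteq> 0" using proj_V[OF u(1)] by simp
  then show ?thesis
    using kernel_normal_hom_subgroup[OF h_hom_inner_proj_1]
      complementary_kernel_span(2)[OF h_hom_inner_proj_1] u(3) by blast
qed

lemma V1_nonzero:
  assumes "stratified_lie_algebra br V s"
  shows "\<exists>u\<in>V 1. u \<noteq> 0"
proof (rule ccontr)
  assume "\<not> (\<exists>u\<in>V 1. u \<noteq> 0)"
  then have V1: "V 1 \<subseteq> {0}" by blast
  have strat: "\<forall>i j. 1 \<le> i \<longrightarrow> 1 \<le> j \<longrightarrow>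
      span {br x y | x y. x \<in> V i \<and> y \<in> V j} = V (i + j)"
    using assms unfolding stratified_lie_algebra_def by (rule conjunct2)
  have Vz: "V (Suc j) \<subseteq> {0}" for j
  proof (induction j)
    case (Suc j)
    have "V (Suc (Suc j)) = span {br x y | x y. x \<in> V 1 \<and> y \<in> V (Suc j)}"
      using strat[rule_format, of 1 "Suc j"] by (simp add: Suc_eq_plus1_left)
    also have "\<dots> \<subseteq> span {0}"
      using V1 bilinear_lzero[OF bilinear_br] by (intro span_mono) auto
    finally show ?case by simp
  qed (use V1 in \<open>simp add: One_nat_def\<close>)
  have "(\<Union>i\<in>{1..s}. V i) \<subseteq> {0}"
  proof (rule UN_least)
    fix i assume "i \<in> {1..s}"
    then show "V i \<subseteq> {0}" using Vz[of "i - 1"] by (simp add: Suc_diff_1)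
  qed
  then have "span (\<Union>i\<in>{1..s}. V i) \<subseteq> span {0}" by (rule span_mono)
  then have "(UNIV :: 'g set) = {0}" using span_V by auto
  then show False using UNIV_not_singleton by blast
qed

end

theorem proposition11p14:
  fixes br :: "'g::euclidean_space \<Rightarrow> 'g \<Rightarrow> 'g" and V :: "nat \<Rightarrow> 'g set" and s :: nat
  assumes "stratified_lie_algebra br V s"
  shows "((\<exists>N. normal_hom_subgroup br V s N \<and> quotient_h_iso_R br V s N) \<and>
          (\<forall>N. normal_hom_subgroup br V s N \<and> quotient_h_iso_R br V s N \<longrightarrow>
               (\<exists>A. hom_subgroup br V s A \<and> complementary br s N A)))
       \<and> ((\<exists>H. hom_subgroup br V s H \<and> subgroup_h_iso_R br V s H) \<and>
          (\<forall>H. hom_subgroup br V s H \<and> subgroup_h_iso_R br V s H \<longrightarrow>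
               (\<exists>N. normal_hom_subgroup br V s N \<and> complementary br s H N)))"
proof -
  interpret graded_group br V s
    using assms unfolding stratified_lie_algebra_def graded_group_def by (rule conjunct1)
  obtain u where u: "u \<in> V 1" "u \<noteq> 0" using V1_nonzero[OF assms] by blast
  have "proj 1 u \<bullet> u \<noteq> 0" using u proj_V[OF u(1)] by simp
  then have "quotient_h_iso_R br V s {x. proj 1 x \<bullet> u = 0}"
    using h_hom_inner_proj_1 surj_h_hom_iff[OF h_hom_inner_proj_1] u(1)
    unfolding quotient_h_iso_R_def by blast
  then show ?thesis
    using kernel_normal_hom_subgroup[OF h_hom_inner_proj_1] kernel_has_complement
      span_V1_hom_subgroup[OF u(1)] span_V1_h_iso_R[OF u] h_iso_R_subgroup_has_complement
    by blast
qed

end
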